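(* There exist $t_1, t_2 \in \mathsf{Topo}$ such that $t_1$ embeds in $t_2$ and $|t_1| = |t_2|$ (equal numbers of leaves), but for all $q_1 \in \mathsf{PIFOTree}(t_1)$ and $q_2 \in \mathsf{PIFOTree}(t_2)$, $q_1$ does not simulate $q_2$, i.e., $q_2 \preceq q_1$ does not hold.
   Context: Fix a set $\mathsf{Pkt}$ of packets and a totally ordered set $\mathsf{Rk}$ of ranks (smaller is more favorable). Assume $\mathsf{Pkt}$ is infinite and $\mathsf{Rk}$ has no least and no greatest element. PIFOs: for a set $S$, a PIFO over $S$ is a finite sequence of pairs $(s,r) \in S\times\mathsf{Rk}$ in insertion order; $\mathsf{PIFO}(S)$ is the set of these. $\mathsf{push}_{\mathsf{PIFO}}(p,s,r)$ appends $(s,r)$. $\mathsf{pop}_{\mathsf{PIFO}}(p)$ is undefined if $p$ is empty; otherwise it removes the entry of minimal rank (earliest-inserted among ties) and returns its element together with the rest. Topologies: $\mathsf{Topo}$ is the smallest set with $* \in \mathsf{Topo}$ and $\mathsf{Node}(\vec t)\in\mathsf{Topo}$ for every $n\in\mathbb{N}$, $\vec t\in\mathsf{Topo}^n$. Number of leaves: $|*|=1$, $|\mathsf{Node}(\vec t)| = \sum_i |\vec t[i]|$. PIFO trees: $\mathsf{Leaf}(p)\in\mathsf{PIFOTree}( * )$ for $p\in\mathsf{PIFO}(\mathsf{Pkt})$; $\mathsf{Internal}(\vec q,p)\in\mathsf{PIFOTree}(\mathsf{Node}(\vec t))$ whenever $\vec t\in\mathsf{Topo}^n$, $p\in\mathsf{PIFO}(\{1,\dots,n\})$,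 $\vec q[i]\in\mathsf{PIFOTree}(\vec t[i])$. $\vec q[q'/i]$ replaces the $i$-th entry by $q'$. pop (partial): $\mathsf{pop}(\mathsf{Leaf}(p)) = (pkt,\mathsf{Leaf}(p'))$ if $\mathsf{pop}_{\mathsf{PIFO}}(p)=(pkt,p')$; $\mathsf{pop}(\mathsf{Internal}(\vec q,p)) = (pkt,\mathsf{Internal}(\vec q[q'/i],p'))$ if $\mathsf{pop}_{\mathsf{PIFO}}(p)=(i,p')$ and $\mathsf{pop}(\vec q[i])=(pkt,q')$; undefined otherwise. Paths: $\mathsf{Path}( * )=\mathsf{Rk}$; $\mathsf{Path}(\mathsf{Node}(\vec t))$ consists of $(i,r)::pt$ with $1\le i\le n$, $r\in\mathsf{Rk}$, $pt\in\mathsf{Path}(\vec t[i])$. push: $\mathsf{push}(\mathsf{Leaf}(p),pkt,r)=\mathsf{Leaf}(\mathsf{push}_{\mathsf{PIFO}}(p,pkt,r))$; $\mathsf{push}(\mathsf{Internal}(\vec q,p),pkt,(i,r)::pt)=\mathsf{Internal}(\vec q[\mathsf{push}(\vec q[i],pkt,pt)/i],\mathsf{push}_{\mathsf{PIFO}}(p,i,r))$. Simulation: $R\subseteq\mathsf{PIFOTree}(s_1)\times\mathsf{PIFOTree}(s_2)$ is a simulation if for all $pkt$ and $q \mathrel{R} q'$: (1) if $\mathsf{pop}(q)$ is undefined so is $\mathsf{pop}(q')$; (2) if $\mathsf{pop}(q)=(pkt,q_\circ)$ then $\mathsf{pop}(q')=(pkt,q_\circ')$ with $q_\circ \mathrel{R}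 q_\circ'$; (3) for every $pt\in\mathsf{Path}(s_1)$ there is $pt'\in\mathsf{Path}(s_2)$ with $\mathsf{push}(q,pkt,pt)\mathrel{R}\mathsf{push}(q',pkt,pt')$. $q\preceq q'$ ("$q'$ simulates $q$") means some simulation relates them. Addresses and embeddings: $\mathsf{Addr}(t)\subseteq\mathbb{N}^*$ is the smallest set with $\epsilon\in\mathsf{Addr}(t)$ and $i\cdot\alpha\in\mathsf{Addr}(\mathsf{Node}(\vec t))$ for $1\le i\le n$, $\alpha\in\mathsf{Addr}(\vec t[i])$; $t/\epsilon=t$, $\mathsf{Node}(\vec t)/(i\cdot\alpha)=\vec t[i]/\alpha$. An embedding of $t_1$ in $t_2$ is an injective $f:\mathsf{Addr}(t_1)\to\mathsf{Addr}(t_2)$ with $f(\epsilon)=\epsilon$, $t_2/f(\alpha)=*$ whenever $t_1/\alpha=*$, and $\alpha$ a prefix of $\alpha'$ iff $f(\alpha)$ a prefix of $f(\alpha')$. *)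

theory Defs
  imports Main "HOL-Library.Sublist"
begin

type_synonym ('s, 'r) pifo = "('s \<times> 'r) list"

definition pifo_push :: "('s, 'r) pifo \<Rightarrow> 's \<Rightarrow> 'r \<Rightarrow> ('s, 'r) pifo" where
  "pifo_push p s r = p @ [(s, r)]"

definition pifo_pop :: "('s, 'r::linorder) pifo \<Rightarrow> ('s \<times> ('s, 'r) pifo) option" where
  "pifo_pop p = (if p = [] then None else
     (let m = Min (snd ` set p);
          i = (LEAST i. i < length p \<and> snd (p ! i) = m)
      in Some (fst (p ! i), take i p @ drop (Suc i) p)))"

datatype topo = Star | Node "topo list"

fun leaves :: "topo \<Rightarrow> nat" where
  "leaves Star = 1"
| "leaves (Node ts) = sum_list (map leaves ts)"

text \<open>Children of an internal node are indexed 1..n (stored at list positions 0..n-1).\<close>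
datatype ('p, 'r) ptree =
    Leaf "('p, 'r) pifo"
  | Internal "('p, 'r) ptree list" "(nat, 'r) pifo"

inductive ptree_of :: "topo \<Rightarrow> ('p, 'r) ptree \<Rightarrow> bool" where
  leaf: "ptree_of Star (Leaf p)"
| internal: "\<lbrakk> length qs = length ts;
              \<forall>i < length ts. ptree_of (ts ! i) (qs ! i);
              \<forall>(i, r) \<in> set p. 1 \<le> i \<and> i \<le> length ts \<rbrakk>
             \<Longrightarrow> ptree_of (Node ts) (Internal qs p)"

lemma size_nth_less:
  "k < length qs \<Longrightarrow> size (qs ! k) < Suc (size_list size qs)"
  using size_list_estimation'[of "qs ! k" qs "size (qs ! k)" size] nth_mem[of k qs]
  by simp

function pop :: "('p, 'r::linorder) ptree \<Rightarrow> ('p \<times> ('p, 'r) ptree) option" where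
  "pop (Leaf p) = (case pifo_pop p of None \<Rightarrow> None | Some (pkt, p') \<Rightarrow> Some (pkt, Leaf p'))"
| "pop (Internal qs p) = (case pifo_pop p of None \<Rightarrow> None
     | Some (i, p') \<Rightarrow>
         (if 1 \<le> i \<and> i \<le> length qs then
            (case pop (qs ! (i - 1)) of None \<Rightarrow> None
             | Some (pkt, q') \<Rightarrow> Some (pkt, Internal (qs[i - 1 := q']) p'))
          else None))"
  by pat_completeness auto
termination
  apply (relation "measure size")
   apply simp
  apply clarsimp
  subgoal for qs p i
  proof -
    assume "Suc 0 \<le> i" "i \<le> length qs"
    then have "i - Suc 0 < length qs" by simp
    then have "size (qs ! (i - Suc 0)) < Suc (size_list size qs)" by (rule size_nth_less)
    then show ?thesis by linarith
  qed
  done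

datatype 'r path = PLeaf 'r | PStep nat 'r "'r path"

inductive path_of :: "topo \<Rightarrow> 'r path \<Rightarrow> bool" where
  "path_of Star (PLeaf r)"
| "\<lbrakk> 1 \<le> i; i \<le> length ts; path_of (ts ! (i - 1)) pt \<rbrakk> \<Longrightarrow> path_of (Node ts) (PStep i r pt)"

text \<open>push on a well-typed path; on ill-typed arguments it is left unchanged (never used).\<close>
fun push :: "('p, 'r) ptree \<Rightarrow> 'p \<Rightarrow> 'r path \<Rightarrow> ('p, 'r) ptree" where
  "push (Leaf p) pkt (PLeaf r) = Leaf (pifo_push p pkt r)"
| "push (Internal qs p) pkt (PStep i r pt) =
     Internal (qs[i - 1 := push (qs ! (i - 1)) pkt pt]) (pifo_push p i r)"
| "push q pkt pt = q"

definition is_simulation ::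
  "topo \<Rightarrow> topo \<Rightarrow> (('p, 'r::linorder) ptree \<Rightarrow> ('p, 'r) ptree \<Rightarrow> bool) \<Rightarrow> bool" where
  "is_simulation s1 s2 R \<longleftrightarrow>
     (\<forall>q q'. R q q' \<longrightarrow> ptree_of s1 q \<and> ptree_of s2 q') \<and>
     (\<forall>q q'. R q q' \<longrightarrow>
        (pop q = None \<longrightarrow> pop q' = None) \<and>
        (\<forall>pkt q0. pop q = Some (pkt, q0) \<longrightarrow> (\<exists>q0'. pop q' = Some (pkt, q0') \<and> R q0 q0')) \<and>
        (\<forall>pkt pt. path_of s1 pt \<longrightarrow>
           (\<exists>pt'. path_of s2 pt' \<and> R (push q pkt pt) (push q' pkt pt'))))"

text \<open>simulated_by s1 s2 q q' means q \<preceq> q', i.e. q' (of topology s2) simulates q (of topology s1).\<close>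
definition simulated_by ::
  "topo \<Rightarrow> topo \<Rightarrow> ('p, 'r::linorder) ptree \<Rightarrow> ('p, 'r) ptree \<Rightarrow> bool" where
  "simulated_by s1 s2 q q' \<longleftrightarrow> (\<exists>R. is_simulation s1 s2 R \<and> R q q')"


inductive is_addr :: "topo \<Rightarrow> nat list \<Rightarrow> bool" where
  nil: "is_addr t []"
| cons: "\<lbrakk> 1 \<le> i; i \<le> length ts; is_addr (ts ! (i - 1)) a \<rbrakk> \<Longrightarrow> is_addr (Node ts) (i # a)"

definition addrs :: "topo \<Rightarrow> nat list set" where
  "addrs t = {a. is_addr t a}"

fun subtree :: "topo \<Rightarrow> nat list \<Rightarrow> topo" where
  "subtree t [] = t"
| "subtree (Node ts) (i # a) = subtree (ts ! (i - 1)) a"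
| "subtree Star (i # a) = Star"

definition embedding :: "topo \<Rightarrow> topo \<Rightarrow> (nat list \<Rightarrow> nat list) \<Rightarrow> bool" where
  "embedding t1 t2 f \<longleftrightarrow>
     f ` addrs t1 \<subseteq> addrs t2 \<and> inj_on f (addrs t1) \<and> f [] = [] \<and>
     (\<forall>a \<in> addrs t1. subtree t1 a = Star \<longrightarrow> subtree t2 (f a) = Star) \<and>
     (\<forall>a \<in> addrs t1. \<forall>a' \<in> addrs t1. prefix a a' \<longleftrightarrow> prefix (f a) (f a'))"

end

theory Submission
  imports Defs
begin

text \<open>
  A flat tree, all of whose children are leaves, is one PIFO of leaf indices over leaf PIFOs.
  If it pops \<open>y\<close> next, then after one more push of \<open>w\<close> its next two pops cannot both
  avoid \<open>y\<close> and \<open>w\<close>: either the root still picks the old leaf, which now yields \<open>y\<close> or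
  \<open>w\<close>, or the new root entry is served first, and then the old choice \<open>y\<close> comes right after.

  The tree \<open>Node [Node [*, *], *]\<close> is not so restricted. Pushing \<open>y\<close>, \<open>c\<close>, \<open>x\<close> with ranks
  below all ranks already present makes it pop \<open>y\<close> next, while one more push of \<open>w\<close> with a
  still smaller rank at the inner node redirects that node from the leaf of \<open>y\<close> to the leaf
  of \<open>x\<close>, after which the root turns to \<open>c\<close>. A simulation transfers this pop pattern from
  the simulated tree to the simulating one, so the flat tree with three leaves cannot
  simulate the nested one.
\<close>

abbreviation flat3 :: topo where
  "flat3 \<equiv> Node [Star, Star, Star]"

abbreviation nested3 :: topo where
  "nested3 \<equiv> Node [Node [Star, Star], Star]"

lemma pifo_pop_append_Cons:
  assumes "\<forall>e\<in>set u. r < snd e" and "\<forall>e\<in>set v. r \<le> snd e"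
  shows "pifo_pop (u @ (s, r) # v) = Some (s, u @ v)"
proof -
  let ?p = "u @ (s, r) # v"
  have min: "Min (snd ` set ?p) = r"
    by (rule Min_eqI) (use assms in force)+
  have least: "(LEAST i. i < length ?p \<and> snd (?p ! i) = r) = length u"
  proof (rule Least_equality)
    fix k assume k: "k < length ?p \<and> snd (?p ! k) = r"
    show "length u \<le> k"
    proof (rule ccontr)
      assume "\<not> length u \<le> k"
      then have "u ! k \<in> set u" "?p ! k = u ! k" by (simp_all add: nth_append)
      with assms(1) k show False by force
    qed
  qed simp
  show ?thesis unfolding pifo_pop_def Let_def min least by simp
qed

lemma pifo_pop_SomeD:
  assumes "pifo_pop p = Some (s, p')"
  obtains u r v where "p = u @ (s, r) # v" "p' = u @ v"
    "\<forall>e\<in>set u. r < snd e" "\<forall>e\<in>set v. r \<le> snd e"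
proof -
  have "p \<noteq> []" using assms by (simp add: pifo_pop_def split: if_splits)
  define m where "m = Min (snd ` set p)"
  define i where "i = (LEAST i. i < length p \<and> snd (p ! i) = m)"
  have "m \<in> snd ` set p" using \<open>p \<noteq> []\<close> by (simp add: m_def)
  then have "\<exists>k. k < length p \<and> snd (p ! k) = m" by (metis imageE in_set_conv_nth)
  then have "i < length p \<and> snd (p ! i) = m" unfolding i_def by (rule LeastI_ex)
  then have i: "i < length p" "snd (p ! i) = m" by simp_all
  have before_i: "snd (p ! k) \<noteq> m" if "k < i" for k
    using not_less_Least[OF that[unfolded i_def]] that i(1) by (simp add: i_def)
  have m_le: "\<forall>e\<in>set p. m \<le> snd e" by (simp add: m_def)
  have "pifo_pop p = Some (fst (p ! i), take i p @ drop (Suc i) p)"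
    using \<open>p \<noteq> []\<close> unfolding pifo_pop_def Let_def i_def m_def by simp
  with assms have s: "p ! i = (s, m)" and p': "p' = take i p @ drop (Suc i) p"
    using i(2) by (metis option.inject prod.collapse prod.inject)+
  have "p = take i p @ (s, m) # drop (Suc i) p" using i(1) s by (metis id_take_nth_drop)
  moreover have "\<forall>e\<in>set (take i p). m < snd e"
    using before_i m_le by (metis in_set_conv_nth length_take min_less_iff_conj nth_mem nth_take
        order_le_neq_trans)
  moreover have "\<forall>e\<in>set (drop (Suc i) p). m \<le> snd e" using m_le set_drop_subset by fast
  ultimately show ?thesis using that p' by blast
qed

lemma pifo_pop_snoc:
  assumes "pifo_pop p = Some (s, p')"
  shows "pifo_pop (p @ [e]) = Some (s, p' @ [e]) \<or> pifo_pop (p @ [e]) = Some (fst e, p)"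
proof -
  obtain u r v where p: "p = u @ (s, r) # v" "p' = u @ v"
    and u: "\<forall>e\<in>set u. r < snd e" and v: "\<forall>e\<in>set v. r \<le> snd e"
    using pifo_pop_SomeD[OF assms] .
  show ?thesis
  proof (cases "r \<le> snd e")
    case True
    then have "pifo_pop (u @ (s, r) # v @ [e]) = Some (s, u @ v @ [e])"
      using u v by (intro pifo_pop_append_Cons) auto
    then show ?thesis using p by simp
  next
    case False
    then have "pifo_pop (p @ [(fst e, snd e)]) = Some (fst e, p @ [])"
      using p u v by (intro pifo_pop_append_Cons) auto
    then show ?thesis by simp
  qed
qed

lemma pifo_pop_snoc_pop:
  assumes "pifo_pop p = Some (s, p')"
    and "pifo_pop (p @ [e]) = Some (x, P)" and "pifo_pop P = Some (c, P')"
  shows "x = s \<or> c = s"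
  using pifo_pop_snoc[OF assms(1), of e] assms by auto

lemma ptree_of_Star_iff: "ptree_of Star q \<longleftrightarrow> (\<exists>l. q = Leaf l)"
  by (auto elim: ptree_of.cases intro: ptree_of.intros)

lemma ptree_of_Node_iff:
  "ptree_of (Node ts) q \<longleftrightarrow> (\<exists>qs p. q = Internal qs p \<and> length qs = length ts \<and>
     (\<forall>i<length ts. ptree_of (ts ! i) (qs ! i)) \<and> (\<forall>(i, r)\<in>set p. 1 \<le> i \<and> i \<le> length ts))"
  by (auto elim: ptree_of.cases intro!: ptree_of.internal)

lemma path_of_Star_iff: "path_of Star pt \<longleftrightarrow> (\<exists>r. pt = PLeaf r)"
  by (auto elim: path_of.cases intro: path_of.intros)

lemma path_of_Node_iff:
  "path_of (Node ts) pt \<longleftrightarrow>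
     (\<exists>i r pt'. pt = PStep i r pt' \<and> 1 \<le> i \<and> i \<le> length ts \<and> path_of (ts ! (i - 1)) pt')"
  by (auto elim: path_of.cases intro: path_of.intros)

lemma pop_Leaf_eq_Some_iff:
  "pop (Leaf l) = Some (pkt, q) \<longleftrightarrow> (\<exists>l'. pifo_pop l = Some (pkt, l') \<and> q = Leaf l')"
  by (auto split: option.splits)

lemma pop_Internal_eq_Some_iff:
  "pop (Internal qs p) = Some (pkt, q) \<longleftrightarrow>
     (\<exists>i p' q'. pifo_pop p = Some (i, p') \<and> 1 \<le> i \<and> i \<le> length qs \<and>
        pop (qs ! (i - 1)) = Some (pkt, q') \<and> q = Internal (qs[i - 1 := q']) p')"
  by (auto split: option.splits if_splits)

lemma pop_Internal_leaves_eq_Some: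
  assumes "pop (Internal qs p) = Some (pkt, q)" and "\<forall>k<length qs. \<exists>l. qs ! k = Leaf l"
  obtains i p' l l' where "pifo_pop p = Some (i, p')" and "1 \<le> i" and "i \<le> length qs"
    and "qs ! (i - 1) = Leaf l" and "pifo_pop l = Some (pkt, l')"
proof -
  obtain i p' q' where i: "pifo_pop p = Some (i, p')" "1 \<le> i" "i \<le> length qs"
    and "pop (qs ! (i - 1)) = Some (pkt, q')"
    using assms(1) by (auto simp: pop_Internal_eq_Some_iff simp del: pop.simps)
  moreover obtain l where "qs ! (i - 1) = Leaf l" using assms(2) i by force
  ultimately show ?thesis using that by (auto simp: pop_Leaf_eq_Some_iff simp del: pop.simps)
qed

definition pop_pattern :: "topo \<Rightarrow> ('p, 'r::linorder) ptree \<Rightarrow> 'p \<Rightarrow> 'p \<Rightarrow> 'p \<Rightarrow> 'p \<Rightarrow> bool" where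
  "pop_pattern s q y w x c \<longleftrightarrow> (\<exists>q'. pop q = Some (y, q')) \<and>
     (\<exists>pt q1 q2. path_of s pt \<and> pop (push q w pt) = Some (x, q1) \<and> pop q1 = Some (c, q2))"

lemma ptree_of_flat:
  assumes "\<forall>t\<in>set ts. t = Star" and "ptree_of (Node ts) q"
  obtains qs p where "q = Internal qs p" and "length qs = length ts"
    and "\<forall>k<length qs. \<exists>l. qs ! k = Leaf l"
proof -
  obtain qs p where "q = Internal qs p" and "length qs = length ts"
    and "\<forall>k<length ts. ptree_of (ts ! k) (qs ! k)"
    using assms(2) by (auto simp: ptree_of_Node_iff)
  with assms(1) show ?thesis using that by (metis nth_mem ptree_of_Star_iff)
qed

lemma path_of_flat:
  assumes "\<forall>t\<in>set ts. t = Star" and "path_of (Node ts) pt"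
  obtains j r r' where "pt = PStep j r (PLeaf r')" and "1 \<le> j" and "j \<le> length ts"
proof -
  obtain j r pt' where "pt = PStep j r pt'" and j: "1 \<le> j" "j \<le> length ts"
    and "path_of (ts ! (j - 1)) pt'"
    using assms(2) by (auto simp: path_of_Node_iff)
  moreover have "ts ! (j - 1) = Star" using assms(1) j by simp
  ultimately show ?thesis using that by (auto simp: path_of_Star_iff)
qed

lemma flat_pop_pattern:
  assumes "\<forall>t\<in>set ts. t = Star" and "ptree_of (Node ts) S" and "pop_pattern (Node ts) S y w x c"
  shows "x = y \<or> x = w \<or> c = y"
proof -
  obtain qs p where S: "S = Internal qs p" and len: "length qs = length ts"
    and leaf: "\<forall>k<length qs. \<exists>l. qs ! k = Leaf l"
    using ptree_of_flat[OF assms(1,2)] .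
  obtain pt T T' where "path_of (Node ts) pt"
    and pop_x: "pop (push S w pt) = Some (x, T)" and pop_c: "pop T = Some (c, T')"
    and pop_y: "\<exists>S'. pop S = Some (y, S')"
    using assms(3) unfolding pop_pattern_def by blast
  then obtain j r r' where j: "pt = PStep j r (PLeaf r')" "1 \<le> j" "j \<le> length qs"
    using path_of_flat[OF assms(1)] len by metis
  obtain i p' l l' where i: "pifo_pop p = Some (i, p')" "1 \<le> i" "i \<le> length qs"
    and l: "qs ! (i - 1) = Leaf l" "pifo_pop l = Some (y, l')"
    using pop_y leaf unfolding S by (metis pop_Internal_leaves_eq_Some)
  obtain lj where lj: "qs ! (j - 1) = Leaf lj" using leaf j by force
  have "push S w pt = Internal (qs[j - 1 := Leaf (lj @ [(w, r')])]) (p @ [(j, r)])"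
    using lj by (simp add: S j(1) pifo_push_def)
  with pop_x have pop_x:
    "pop (Internal (qs[j - 1 := Leaf (lj @ [(w, r')])]) (p @ [(j, r)])) = Some (x, T)"
    by simp
  consider (old) "pifo_pop (p @ [(j, r)]) = Some (i, p' @ [(j, r)])"
    | (new) "pifo_pop (p @ [(j, r)]) = Some (j, p)"
    using pifo_pop_snoc[OF i(1), of "(j, r)"] by auto
  then show ?thesis
  proof cases
    case old
    then obtain q where "pop ((qs[j - 1 := Leaf (lj @ [(w, r')])]) ! (i - 1)) = Some (x, q)"
      using pop_x i by (auto simp: pop_Internal_eq_Some_iff simp del: pop.simps)
    then show ?thesis
      using pifo_pop_snoc[OF l(2), of "(w, r')"] i j l lj
      by (cases "i = j") (auto simp: pop_Leaf_eq_Some_iff simp del: pop.simps)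
  next
    case new
    then obtain L where L: "pifo_pop (lj @ [(w, r')]) = Some (x, L)"
      and T: "T = Internal (qs[j - 1 := Leaf L]) p"
      using pop_x j by (auto simp: pop_Internal_eq_Some_iff pop_Leaf_eq_Some_iff simp del: pop.simps)
    then obtain q where "pop ((qs[j - 1 := Leaf L]) ! (i - 1)) = Some (c, q)"
      using pop_c i by (auto simp: pop_Internal_eq_Some_iff simp del: pop.simps)
    then show ?thesis
      using pifo_pop_snoc_pop[OF l(2), of "(w, r')" x L] L i j l lj
      by (cases "i = j") (auto simp: pop_Leaf_eq_Some_iff simp del: pop.simps)
  qed
qed

lemma is_simulation_ptree_of: "is_simulation s1 s2 R \<Longrightarrow> R q q' \<Longrightarrow> ptree_of s2 q'"
  unfolding is_simulation_def by blast

lemma is_simulation_pop: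
  "is_simulation s1 s2 R \<Longrightarrow> R q q' \<Longrightarrow> pop q = Some (pkt, q0) \<Longrightarrow>
     \<exists>q0'. pop q' = Some (pkt, q0') \<and> R q0 q0'"
  unfolding is_simulation_def by blast

lemma is_simulation_push:
  "is_simulation s1 s2 R \<Longrightarrow> R q q' \<Longrightarrow> path_of s1 pt \<Longrightarrow>
     \<exists>pt'. path_of s2 pt' \<and> R (push q pkt pt) (push q' pkt pt')"
  unfolding is_simulation_def by blast

definition push_step :: "topo \<Rightarrow> ('p, 'r) ptree \<Rightarrow> ('p, 'r) ptree \<Rightarrow> bool" where
  "push_step s q q' \<longleftrightarrow> (\<exists>pkt pt. path_of s pt \<and> q' = push q pkt pt)"

lemma push_steps_push:
  "path_of s pt \<Longrightarrow> (push_step s)\<^sup>*\<^sup>* q Q \<Longrightarrow> (push_step s)\<^sup>*\<^sup>* q (push Q pkt pt)"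
  by (erule rtranclp.rtrancl_into_rtrancl) (auto simp: push_step_def)

lemma is_simulation_push_steps:
  assumes "is_simulation s1 s2 R" and "(push_step s1)\<^sup>*\<^sup>* q Q" and "R q q'"
  shows "\<exists>Q'. (push_step s2)\<^sup>*\<^sup>* q' Q' \<and> R Q Q'"
  using assms(2)
proof (induction rule: rtranclp_induct)
  case base
  then show ?case using assms(3) by blast
next
  case (step Q Q2)
  then obtain Q' where "(push_step s2)\<^sup>*\<^sup>* q' Q'" "R Q Q'" by blast
  moreover obtain pkt pt where "path_of s1 pt" "Q2 = push Q pkt pt"
    using step.hyps(2) unfolding push_step_def by blast
  ultimately show ?case using is_simulation_push[OF assms(1)] push_steps_push by metis
qed

lemma is_simulation_pop_pattern:
  assumes "is_simulation s1 s2 R" and "R q q'" and "pop_pattern s1 q y w x c"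
  shows "pop_pattern s2 q' y w x c"
proof -
  obtain q0 pt q1 q2 where "pop q = Some (y, q0)" and pt: "path_of s1 pt"
    and x: "pop (push q w pt) = Some (x, q1)" and c: "pop q1 = Some (c, q2)"
    using assms(3) unfolding pop_pattern_def by blast
  then have "\<exists>q0'. pop q' = Some (y, q0')" using is_simulation_pop[OF assms(1,2)] by blast
  moreover obtain pt' where "path_of s2 pt'" and R_w: "R (push q w pt) (push q' w pt')"
    using is_simulation_push[OF assms(1,2) pt] by blast
  moreover obtain q1' where "pop (push q' w pt') = Some (x, q1')" and "R q1 q1'"
    using is_simulation_pop[OF assms(1) R_w x] by blast
  moreover obtain q2' where "pop q1' = Some (c, q2')"
    using is_simulation_pop[OF assms(1) \<open>R q1 q1'\<close> c] by blast
  ultimately show ?thesis unfolding pop_pattern_def by blast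
qed

lemma ptree_of_nested3_cases:
  assumes "ptree_of nested3 q"
  obtains l11 l12 l2 p1 p0 where "q = Internal [Internal [Leaf l11, Leaf l12] p1, Leaf l2] p0"
  using assms
  by (auto simp: ptree_of_Node_iff ptree_of_Star_iff length_Suc_conv numeral_2_eq_2 All_less_Suc2)

lemma ex_two_below_finite:
  fixes F :: "'r::{linorder, no_bot} set"
  assumes "finite F"
  obtains a b where "a < b" and "\<forall>r\<in>F. b < r"
proof -
  obtain b where "\<forall>r\<in>F. b < r"
  proof (cases "F = {}")
    case False
    obtain b where "b < Min F" using lt_ex by blast
    with assms False that show ?thesis by (meson Min_le less_le_trans)
  qed simp
  moreover obtain a where "a < b" using lt_ex by blast
  ultimately show ?thesis using that by blast
qed

lemma nested3_pop_pattern: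
  fixes q :: "('p, 'r::{linorder, no_bot}) ptree"
  assumes "ptree_of nested3 q"
  shows "\<exists>Q. (push_step nested3)\<^sup>*\<^sup>* q Q \<and> pop_pattern nested3 Q y w x c"
proof -
  obtain l11 l12 l2 p1 p0 where q: "q = Internal [Internal [Leaf l11, Leaf l12] p1, Leaf l2] p0"
    using assms by (rule ptree_of_nested3_cases)
  define F where "F = snd ` set p0 \<union> snd ` set p1 \<union> snd ` set l11 \<union> snd ` set l12 \<union> snd ` set l2"
  obtain a b where "a < b" and b: "\<forall>r\<in>F. b < r"
    by (rule ex_two_below_finite[of F]) (simp_all add: F_def)
  then have a: "\<forall>r\<in>F. a < r" by (auto intro: less_trans)
  define Q where "Q = push (push (push q y (PStep 1 a (PStep 2 b (PLeaf a))))
    c (PStep 2 a (PLeaf a))) x (PStep 1 a (PStep 1 b (PLeaf a)))"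
  define pw where "pw = PStep 1 a (PStep 1 a (PLeaf b))"
  have reach: "(push_step nested3)\<^sup>*\<^sup>* q Q"
    unfolding Q_def
    by (intro push_steps_push rtranclp.rtrancl_refl) (simp_all add: path_of_Node_iff path_of_Star_iff)
  have pw: "path_of nested3 pw" by (simp add: pw_def path_of_Node_iff path_of_Star_iff)
  have Q: "Q = Internal [Internal [Leaf (l11 @ [(x, a)]), Leaf (l12 @ [(y, a)])] (p1 @ [(2, b), (1, b)]),
      Leaf (l2 @ [(c, a)])] (p0 @ [(1, a), (2, a), (1, a)])"
    unfolding Q_def q by (simp add: pifo_push_def)
  have pop_y: "\<exists>Q'. pop Q = Some (y, Q')"
  proof -
    have "pifo_pop (p0 @ [(1, a), (2, a), (1, a)]) = Some (1, p0 @ [(2, a), (1, a)])"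
      using a by (intro pifo_pop_append_Cons) (auto simp: F_def)
    moreover have "pifo_pop (p1 @ [(2, b), (1, b)]) = Some (2, p1 @ [(1, b)])"
      using b by (intro pifo_pop_append_Cons) (auto simp: F_def)
    moreover have "pifo_pop (l12 @ [(y, a)]) = Some (y, l12)"
      using pifo_pop_append_Cons[of l12 a "[]" y] a by (simp add: F_def)
    ultimately show ?thesis unfolding Q by simp
  qed
  have pop_x_c: "\<exists>U V. pop (push Q w pw) = Some (x, U) \<and> pop U = Some (c, V)"
  proof -
    have "pifo_pop (p0 @ [(1, a), (2, a), (1, a), (1, a)]) = Some (1, p0 @ [(2, a), (1, a), (1, a)])"
      using a by (intro pifo_pop_append_Cons) (auto simp: F_def)
    moreover have "pifo_pop (p1 @ [(2, b), (1, b), (1, a)]) = Some (1, p1 @ [(2, b), (1, b)])"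
      using pifo_pop_append_Cons[of "p1 @ [(2, b), (1, b)]" a "[]" "1::nat"] a b \<open>a < b\<close> by (auto simp: F_def)
    moreover have "pifo_pop (l11 @ [(x, a), (w, b)]) = Some (x, l11 @ [(w, b)])"
      using a \<open>a < b\<close> by (intro pifo_pop_append_Cons) (auto simp: F_def)
    moreover have "pifo_pop (p0 @ [(2, a), (1, a), (1, a)]) = Some (2, p0 @ [(1, a), (1, a)])"
      using a by (intro pifo_pop_append_Cons) (auto simp: F_def)
    moreover have "pifo_pop (l2 @ [(c, a)]) = Some (c, l2)"
      using pifo_pop_append_Cons[of l2 a "[]" c] a by (simp add: F_def)
    ultimately show ?thesis unfolding Q pw_def by (simp add: pifo_push_def)
  qed
  show ?thesis unfolding pop_pattern_def using reach pw pop_y pop_x_c by blast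
qed

lemma addrs_Star: "addrs Star = {[]}"
  by (auto simp: addrs_def elim: is_addr.cases intro: is_addr.intros)

inductive_cases is_addr_NodeE: "is_addr (Node ts) a"

lemma addrs_Node:
  "addrs (Node ts) = insert [] (\<Union>i\<in>{1..length ts}. (#) i ` addrs (ts ! (i - 1)))"
  by (auto simp: addrs_def elim!: is_addr_NodeE intro: is_addr.intros)

lemma addrs_flat3: "addrs flat3 = {[], [1], [2], [3]}"
  by (simp add: addrs_Node addrs_Star numeral_3_eq_3 numeral_2_eq_2 atLeastAtMostSuc_conv insert_commute)

lemma embedding_flat3_nested3:
  "embedding flat3 nested3
     (\<lambda>a. if a = [1] then [1, 1] else if a = [2] then [1, 2] else if a = [3] then [2] else a)"
  unfolding embedding_def addrs_flat3
  by (simp add: addrs_Node addrs_Star numeral_2_eq_2 atLeastAtMostSuc_conv inj_on_def)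

lemma flat3_not_simulates_nested3:
  fixes q1 q2 :: "('p, 'r::{linorder, no_bot}) ptree"
  assumes "\<exists>x y c :: 'p. distinct [x, y, c]" and "ptree_of nested3 q2"
  shows "\<not> simulated_by nested3 flat3 q2 q1"
proof
  assume "simulated_by nested3 flat3 q2 q1"
  then obtain R where R: "is_simulation nested3 flat3 R" and "R q2 q1"
    unfolding simulated_by_def by blast
  obtain x y c :: 'p where "distinct [x, y, c]" using assms(1) by blast
  obtain Q2 where "(push_step nested3)\<^sup>*\<^sup>* q2 Q2" and pattern: "pop_pattern nested3 Q2 y c x c"
    using nested3_pop_pattern[OF assms(2)] by blast
  then obtain Q1 where "R Q2 Q1"
    using is_simulation_push_steps[OF R _ \<open>R q2 q1\<close>] by blast
  have "x = y \<or> x = c \<or> c = y"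
    by (rule flat_pop_pattern[OF _ is_simulation_ptree_of[OF R \<open>R Q2 Q1\<close>]
          is_simulation_pop_pattern[OF R \<open>R Q2 Q1\<close> pattern]]) simp
  with \<open>distinct [x, y, c]\<close> show False by auto
qed

theorem proposition5p13:
  assumes "infinite (UNIV :: 'p set)"
  shows "\<exists>t1 t2. (\<exists>f. embedding t1 t2 f) \<and> leaves t1 = leaves t2 \<and>
    (\<forall>(q1 :: ('p, 'r :: {linorder, no_bot, no_top}) ptree) (q2 :: ('p, 'r) ptree).
       ptree_of t1 q1 \<longrightarrow> ptree_of t2 q2 \<longrightarrow> \<not> simulated_by t2 t1 q2 q1)"
proof -
  have three: "\<exists>x y c :: 'p. distinct [x, y, c]"
    using infinite_arbitrarily_large[OF assms, of 3]
    by (metis card_3_iff distinct_length_2_or_more distinct_singleton)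
  have "\<forall>(q1 :: ('p, 'r) ptree) q2. ptree_of flat3 q1 \<longrightarrow> ptree_of nested3 q2 \<longrightarrow>
      \<not> simulated_by nested3 flat3 q2 q1"
    using flat3_not_simulates_nested3[OF three] by blast
  moreover have "leaves flat3 = leaves nested3" by simp
  ultimately show ?thesis using embedding_flat3_nested3 by blast
qed

end
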